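(* Let $f:X\to Y$ be a morphism of $\mathbf{OMLatGal}$. For $b\in Y$, the inverse image of the kernel $b:\downarrow b\to Y$ is $f^{-1}(\downarrow b\to Y)=(\downarrow f^*(b^\perp)\to X)$. For $a\in X$, the direct image of the kernel $a:\downarrow a\to X$ is $\exists_f(\downarrow a\to X)=(\downarrow(f_*(a)^\perp)\to Y)$.
   Context: An orthomodular lattice is a bounded lattice with an order-reversing involution $x\mapsto x^\perp$ such that $x\wedge x^\perp=0$, $x\vee x^\perp=1$, and $x\le y$ implies $y=x\vee(x^\perp\wedge y)$. The category $\mathbf{OMLatGal}$ has orthomodular lattices as objects; a morphism $f:X\to Y$ is a pair $(f_*,f^* )$ of order-reversing functions $f_*:X\to Y$, $f^*:Y\to X$ such that $y\le f_*(x)$ iff $x\le f^*(y)$ for all $x\in X,y\in Y$. The identity on $X$ is the pair whose both components are $x\mapsto x^\perp$. Composition: $(g\circ f)_*=g_*\circ(-)^\perp\circ f_*$, $(g\circ f)^*=f^*\circ(-)^\perp\circ g^*$. Dagger: $(f_*,f^* )^\dagger=(f^*,f_* )$. It is a dagger kernel category (zero object the one-element lattice); for $a\in X$, $\downarrow a=\{u\le a\}$ with complement $u^{\perp_a}=a\wedge u^\perp$, and the downset morphism $a:\downarrow a\to X$ ($a_*(u)=u^\perp$, $a^*(x)=a\wedge x^\perp$) is a dagger kernel. In a dagger kernel category, $\mathrm{coker}(f)=\ker(f^\dagger)^\dagger$; for a kernel $n$ into $Y$, $f^{-1}(n)=\ker(\mathrm{coker}(n)\circ f)$ (the pullback of $n$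 along $f$); for a kernel $m$ into $X$, $\exists_f(m)=\ker(\mathrm{coker}(f\circ m))$ (the image of $f\circ m$). Kernels are identified up to isomorphism over their codomain. *)

theory Defs
  imports Main
begin

record 'a oml =
  carrier :: "'a set"
  le :: "'a \<Rightarrow> 'a \<Rightarrow> bool"
  compl :: "'a \<Rightarrow> 'a"

definition is_glb :: "'a oml \<Rightarrow> 'a \<Rightarrow> 'a \<Rightarrow> 'a \<Rightarrow> bool" where
  "is_glb X x y m \<longleftrightarrow> m \<in> carrier X \<and> le X m x \<and> le X m y \<and>
     (\<forall>z\<in>carrier X. le X z x \<and> le X z y \<longrightarrow> le X z m)"

definition is_lub :: "'a oml \<Rightarrow> 'a \<Rightarrow> 'a \<Rightarrow> 'a \<Rightarrow> bool" where
  "is_lub X x y m \<longleftrightarrow> m \<in> carrier X \<and> le X x m \<and> le X y m \<and>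
     (\<forall>z\<in>carrier X. le X x z \<and> le X y z \<longrightarrow> le X m z)"

definition meet :: "'a oml \<Rightarrow> 'a \<Rightarrow> 'a \<Rightarrow> 'a" where
  "meet X x y = (THE m. is_glb X x y m)"

definition join :: "'a oml \<Rightarrow> 'a \<Rightarrow> 'a \<Rightarrow> 'a" where
  "join X x y = (THE m. is_lub X x y m)"

definition is_bot :: "'a oml \<Rightarrow> 'a \<Rightarrow> bool" where
  "is_bot X b \<longleftrightarrow> b \<in> carrier X \<and> (\<forall>x\<in>carrier X. le X b x)"

definition is_top :: "'a oml \<Rightarrow> 'a \<Rightarrow> bool" where
  "is_top X t \<longleftrightarrow> t \<in> carrier X \<and> (\<forall>x\<in>carrier X. le X x t)"

definition bot :: "'a oml \<Rightarrow> 'a" where "bot X = (THE b. is_bot X b)"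
definition top :: "'a oml \<Rightarrow> 'a" where "top X = (THE t. is_top X t)"

definition is_oml :: "'a oml \<Rightarrow> bool" where
  "is_oml X \<longleftrightarrow>
     (\<forall>x\<in>carrier X. le X x x) \<and>
     (\<forall>x\<in>carrier X. \<forall>y\<in>carrier X. le X x y \<and> le X y x \<longrightarrow> x = y) \<and>
     (\<forall>x\<in>carrier X. \<forall>y\<in>carrier X. \<forall>z\<in>carrier X. le X x y \<and> le X y z \<longrightarrow> le X x z) \<and>
     (\<forall>x\<in>carrier X. \<forall>y\<in>carrier X. \<exists>m. is_glb X x y m) \<and>
     (\<forall>x\<in>carrier X. \<forall>y\<in>carrier X. \<exists>m. is_lub X x y m) \<and>
     (\<exists>b. is_bot X b) \<and> (\<exists>t. is_top X t) \<and>
     (\<forall>x\<in>carrier X. compl X x \<in> carrier X) \<and>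
     (\<forall>x\<in>carrier X. compl X (compl X x) = x) \<and>
     (\<forall>x\<in>carrier X. \<forall>y\<in>carrier X. le X x y \<longrightarrow> le X (compl X y) (compl X x)) \<and>
     (\<forall>x\<in>carrier X. meet X x (compl X x) = bot X) \<and>
     (\<forall>x\<in>carrier X. join X x (compl X x) = top X) \<and>
     (\<forall>x\<in>carrier X. \<forall>y\<in>carrier X. le X x y \<longrightarrow> y = join X x (meet X (compl X x) y))"

text \<open>A morphism f : X -> Y is a pair (f_*, f^*) = (fst f, snd f).\<close>
type_synonym ('a, 'b) mor = "('a \<Rightarrow> 'b) \<times> ('b \<Rightarrow> 'a)"

definition is_mor :: "'a oml \<Rightarrow> 'b oml \<Rightarrow> ('a, 'b) mor \<Rightarrow> bool" where
  "is_mor X Y f \<longleftrightarrow>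
     (\<forall>x\<in>carrier X. fst f x \<in> carrier Y) \<and>
     (\<forall>y\<in>carrier Y. snd f y \<in> carrier X) \<and>
     (\<forall>x\<in>carrier X. \<forall>x'\<in>carrier X. le X x x' \<longrightarrow> le Y (fst f x') (fst f x)) \<and>
     (\<forall>y\<in>carrier Y. \<forall>y'\<in>carrier Y. le Y y y' \<longrightarrow> le X (snd f y') (snd f y)) \<and>
     (\<forall>x\<in>carrier X. \<forall>y\<in>carrier Y. le Y y (fst f x) \<longleftrightarrow> le X x (snd f y))"

definition mor_eq :: "'a oml \<Rightarrow> 'b oml \<Rightarrow> ('a, 'b) mor \<Rightarrow> ('a, 'b) mor \<Rightarrow> bool" where
  "mor_eq X Y f g \<longleftrightarrow> (\<forall>x\<in>carrier X. fst f x = fst g x) \<and> (\<forall>y\<in>carrier Y. snd f y = snd g y)"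

definition comp :: "'b oml \<Rightarrow> ('b, 'c) mor \<Rightarrow> ('a, 'b) mor \<Rightarrow> ('a, 'c) mor" where
  "comp B g f = (fst g \<circ> compl B \<circ> fst f, snd f \<circ> compl B \<circ> snd g)"

definition dagger :: "('a, 'b) mor \<Rightarrow> ('b, 'a) mor" where
  "dagger f = (snd f, fst f)"

definition zero_oml :: "unit oml" where
  "zero_oml = \<lparr>carrier = {()}, le = (\<lambda>_ _. True), compl = (\<lambda>u. u)\<rparr>"

definition to_zero :: "'a oml \<Rightarrow> ('a, unit) mor" where
  "to_zero X = ((\<lambda>_. ()), (\<lambda>_. top X))"

definition from_zero :: "'b oml \<Rightarrow> (unit, 'b) mor" where
  "from_zero Y = ((\<lambda>_. top Y), (\<lambda>_. ()))"

definition zero_mor :: "'a oml \<Rightarrow> 'b oml \<Rightarrow> ('a, 'b) mor" where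
  "zero_mor X Y = comp zero_oml (from_zero Y) (to_zero X)"

definition downset :: "'a oml \<Rightarrow> 'a \<Rightarrow> 'a oml" where
  "downset X a = \<lparr>carrier = {u \<in> carrier X. le X u a}, le = le X,
                  compl = (\<lambda>u. meet X a (compl X u))\<rparr>"

definition downmor :: "'a oml \<Rightarrow> 'a \<Rightarrow> ('a, 'a) mor" where
  "downmor X a = (compl X, (\<lambda>x. meet X a (compl X x)))"

text \<open>k : K -> X is a kernel of g : X -> Y. The universal property is tested against
  all objects whose carrier lives in the type 'z (given by the phantom argument).\<close>
definition is_kernel :: "'z itself \<Rightarrow> 'k oml \<Rightarrow> 'a oml \<Rightarrow> 'b oml \<Rightarrow> ('k, 'a) mor \<Rightarrow> ('a, 'b) mor \<Rightarrow> bool" where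
  "is_kernel T K X Y k g \<longleftrightarrow>
     is_oml K \<and> is_mor K X k \<and> mor_eq K Y (comp X g k) (zero_mor K Y) \<and>
     (\<forall>(Z::'z oml) h. is_oml Z \<and> is_mor Z X h \<and> mor_eq Z Y (comp X g h) (zero_mor Z Y) \<longrightarrow>
        (\<exists>u. is_mor Z K u \<and> mor_eq Z X (comp K k u) h \<and>
             (\<forall>u'. is_mor Z K u' \<and> mor_eq Z X (comp K k u') h \<longrightarrow> mor_eq Z K u' u)))"

end

theory Submission
  imports Defs
begin

text \<open>
  The argument rests on two recognition principles.  First
  (\<open>kernel_downmor\<close>): if the first component of \<open>G : X \<rightarrow> K\<close> equals \<open>1\<close>
  exactly on \<open>\<down>p\<close>, then the downset morphism \<open>\<down>p \<rightarrow> X\<close> is a kernel of \<open>G\<close>.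
  Its proof needs that downsets are again orthomodular lattices (with relative
  complement \<open>u \<mapsto> p \<sqinter> u\<^sup>\<perp>\<close>), that a composite \<open>e \<circ> h\<close> is zero iff
  \<open>e\<^sub>*(h\<^sub>*(z)\<^sup>\<perp>) = 1\<close> for all \<open>z\<close>, and an explicit unique factorisation through
  \<open>\<down>p \<rightarrow> X\<close>.  Second (\<open>kernel_dagger_vanishing\<close>): if the first component of
  \<open>e : Y \<rightarrow> W\<close> equals \<open>1\<close> exactly on \<open>\<down>q\<^sup>\<perp>\<close>, then for every kernel \<open>c\<close> of \<open>e\<close>
  the second component \<open>c\<^sup>*\<close> equals \<open>1\<close> exactly on \<open>\<down>q\<close>.  The theorem follows
  by combining both with the Galois connection of \<open>f\<close>: for the pullback,
  \<open>coker(b) \<circ> f\<close> vanishes exactly on \<open>\<down>f\<^sup>*(b\<^sup>\<perp>)\<close>; for the image,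
  \<open>coker(f \<circ> a)\<close> vanishes exactly on \<open>\<down>f\<^sub>*(a)\<^sup>\<perp>\<close>.
\<close>

lemma meet_unique:
  assumes "\<And>x y. x \<in> carrier X \<Longrightarrow> y \<in> carrier X \<Longrightarrow> le X x y \<Longrightarrow> le X y x \<Longrightarrow> x = y"
    and "is_glb X x y m"
  shows "meet X x y = m"
  unfolding meet_def
  by (rule the_equality) (use assms in \<open>auto simp: is_glb_def\<close>)

lemma join_unique:
  assumes "\<And>x y. x \<in> carrier X \<Longrightarrow> y \<in> carrier X \<Longrightarrow> le X x y \<Longrightarrow> le X y x \<Longrightarrow> x = y"
    and "is_lub X x y m"
  shows "join X x y = m"
  unfolding join_def
  by (rule the_equality) (use assms in \<open>auto simp: is_lub_def\<close>)

lemma top_unique: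
  assumes "\<And>x y. x \<in> carrier X \<Longrightarrow> y \<in> carrier X \<Longrightarrow> le X x y \<Longrightarrow> le X y x \<Longrightarrow> x = y"
    and "is_top X t"
  shows "top X = t"
  unfolding top_def
  by (rule the_equality) (use assms in \<open>auto simp: is_top_def\<close>)

lemma bot_unique:
  assumes "\<And>x y. x \<in> carrier X \<Longrightarrow> y \<in> carrier X \<Longrightarrow> le X x y \<Longrightarrow> le X y x \<Longrightarrow> x = y"
    and "is_bot X b"
  shows "bot X = b"
  unfolding bot_def
  by (rule the_equality) (use assms in \<open>auto simp: is_bot_def\<close>)


locale OM =
  fixes X :: "'a oml"
  assumes oml: "is_oml X"
begin

lemma refl: "x \<in> carrier X \<Longrightarrow> le X x x"
  using oml unfolding is_oml_def by blast
lemma antisym: "x \<in> carrier X \<Longrightarrow> y \<in> carrier X \<Longrightarrow> le X x y \<Longrightarrow> le X y x \<Longrightarrow> x = y"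
  using oml unfolding is_oml_def by blast
lemma trans: "x \<in> carrier X \<Longrightarrow> y \<in> carrier X \<Longrightarrow> z \<in> carrier X \<Longrightarrow> le X x y \<Longrightarrow> le X y z \<Longrightarrow> le X x z"
  using oml unfolding is_oml_def by blast
lemma compl_closed: "x \<in> carrier X \<Longrightarrow> compl X x \<in> carrier X"
  using oml unfolding is_oml_def by blast
lemma compl_compl: "x \<in> carrier X \<Longrightarrow> compl X (compl X x) = x"
  using oml unfolding is_oml_def by blast
lemma compl_anti: "x \<in> carrier X \<Longrightarrow> y \<in> carrier X \<Longrightarrow> le X x y \<Longrightarrow> le X (compl X y) (compl X x)"
  using oml unfolding is_oml_def by blast
lemma meet_compl: "x \<in> carrier X \<Longrightarrow> meet X x (compl X x) = bot X"
  using oml unfolding is_oml_def by blast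
lemma orthomodular: "x \<in> carrier X \<Longrightarrow> y \<in> carrier X \<Longrightarrow> le X x y \<Longrightarrow> y = join X x (meet X (compl X x) y)"
  using oml unfolding is_oml_def by blast

lemma meet_glb: assumes "x \<in> carrier X" "y \<in> carrier X" shows "is_glb X x y (meet X x y)"
proof -
  have "\<forall>x\<in>carrier X. \<forall>y\<in>carrier X. \<exists>m. is_glb X x y m"
    using oml unfolding is_oml_def by (elim conjE) assumption
  then obtain m where "is_glb X x y m" using assms by blast
  then show ?thesis using meet_unique[OF antisym] by simp
qed
lemma join_lub: assumes "x \<in> carrier X" "y \<in> carrier X" shows "is_lub X x y (join X x y)"
proof -
  have "\<forall>x\<in>carrier X. \<forall>y\<in>carrier X. \<exists>m. is_lub X x y m"
    using oml unfolding is_oml_def by (elim conjE) assumption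
  then obtain m where "is_lub X x y m" using assms by blast
  then show ?thesis using join_unique[OF antisym] by simp
qed
lemma top_is: "is_top X (top X)"
proof -
  have "\<exists>t. is_top X t" using oml unfolding is_oml_def by (elim conjE) assumption
  then obtain t where "is_top X t" by blast
  then show ?thesis using top_unique[OF antisym] by simp
qed
lemma bot_is: "is_bot X (bot X)"
proof -
  have "\<exists>b. is_bot X b" using oml unfolding is_oml_def by (elim conjE) assumption
  then obtain b where "is_bot X b" by blast
  then show ?thesis using bot_unique[OF antisym] by simp
qed

lemma le_top: "x \<in> carrier X \<Longrightarrow> le X x (top X)"
  using top_is unfolding is_top_def by blast
lemma top_eqI: "t \<in> carrier X \<Longrightarrow> (\<And>x. x \<in> carrier X \<Longrightarrow> le X x t) \<Longrightarrow> top X = t"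
  by (rule top_unique[OF antisym]) (auto simp: is_top_def)
lemma bot_closed: "bot X \<in> carrier X" and bot_le: "x \<in> carrier X \<Longrightarrow> le X (bot X) x"
  using bot_is unfolding is_bot_def by blast+

lemma meet_closed: "x \<in> carrier X \<Longrightarrow> y \<in> carrier X \<Longrightarrow> meet X x y \<in> carrier X"
  and meet_le1: "x \<in> carrier X \<Longrightarrow> y \<in> carrier X \<Longrightarrow> le X (meet X x y) x"
  and meet_le2: "x \<in> carrier X \<Longrightarrow> y \<in> carrier X \<Longrightarrow> le X (meet X x y) y"
  and meet_greatest: "x \<in> carrier X \<Longrightarrow> y \<in> carrier X \<Longrightarrow> z \<in> carrier X \<Longrightarrow>
      le X z x \<Longrightarrow> le X z y \<Longrightarrow> le X z (meet X x y)"
  using meet_glb unfolding is_glb_def by blast+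

lemma join_closed: "x \<in> carrier X \<Longrightarrow> y \<in> carrier X \<Longrightarrow> join X x y \<in> carrier X"
  and join_ge1: "x \<in> carrier X \<Longrightarrow> y \<in> carrier X \<Longrightarrow> le X x (join X x y)"
  and join_ge2: "x \<in> carrier X \<Longrightarrow> y \<in> carrier X \<Longrightarrow> le X y (join X x y)"
  and join_least: "x \<in> carrier X \<Longrightarrow> y \<in> carrier X \<Longrightarrow> z \<in> carrier X \<Longrightarrow>
      le X x z \<Longrightarrow> le X y z \<Longrightarrow> le X (join X x y) z"
  using join_lub unfolding is_lub_def by blast+

lemma meet_eqI: "is_glb X x y m \<Longrightarrow> meet X x y = m"
  by (rule meet_unique[OF antisym])

lemma meet_absorb: "x \<in> carrier X \<Longrightarrow> y \<in> carrier X \<Longrightarrow> le X x y \<Longrightarrow> meet X x y = x"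
  by (rule meet_eqI) (auto simp: is_glb_def refl)

lemma meet_eq_left_iff: "x \<in> carrier X \<Longrightarrow> y \<in> carrier X \<Longrightarrow> meet X x y = x \<longleftrightarrow> le X x y"
  by (metis meet_absorb meet_le2)

lemma meet_comm: "x \<in> carrier X \<Longrightarrow> y \<in> carrier X \<Longrightarrow> meet X x y = meet X y x"
  by (rule meet_eqI) (auto simp: is_glb_def meet_closed meet_le1 meet_le2 meet_greatest)

lemma meet_mono2: "a \<in> carrier X \<Longrightarrow> x \<in> carrier X \<Longrightarrow> y \<in> carrier X \<Longrightarrow> le X x y \<Longrightarrow>
    le X (meet X a x) (meet X a y)"
  by (meson meet_closed meet_greatest meet_le1 meet_le2 trans)

lemma compl_le_swap: "x \<in> carrier X \<Longrightarrow> y \<in> carrier X \<Longrightarrow> le X x (compl X y) \<longleftrightarrow> le X y (compl X x)"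
  by (metis compl_anti compl_closed compl_compl)

lemma compl_le_swap2: "x \<in> carrier X \<Longrightarrow> y \<in> carrier X \<Longrightarrow> le X (compl X x) y \<longleftrightarrow> le X (compl X y) x"
  by (metis compl_anti compl_closed compl_compl)

lemma de_morgan: assumes x: "x \<in> carrier X" and y: "y \<in> carrier X"
  shows "compl X (join X x y) = meet X (compl X x) (compl X y)"
proof (rule meet_eqI[symmetric])
  have j: "join X x y \<in> carrier X" using x y by (rule join_closed)
  have "le X z (compl X (join X x y))"
    if z: "z \<in> carrier X" "le X z (compl X x)" "le X z (compl X y)" for z
  proof -
    have "le X x (compl X z)" "le X y (compl X z)"
      using z compl_le_swap[OF z(1) x] compl_le_swap[OF z(1) y] by simp_all
    then have "le X (join X x y) (compl X z)" using x y z(1) compl_closed join_least by blast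
    then show ?thesis using compl_le_swap[OF j z(1)] by simp
  qed
  then show "is_glb X (compl X x) (compl X y) (compl X (join X x y))"
    unfolding is_glb_def
    using x y j compl_closed compl_anti[OF x j join_ge1[OF x y]] compl_anti[OF y j join_ge2[OF x y]]
    by blast
qed

lemma de_morgan_rel: assumes p: "p \<in> carrier X" and x: "x \<in> carrier X"
  shows "compl X (meet X p (compl X x)) = join X (compl X p) x"
proof -
  have "meet X p (compl X x) = compl X (join X (compl X p) x)"
    using de_morgan[of "compl X p" x] p x by (simp add: compl_closed compl_compl)
  then show ?thesis using p x by (simp add: compl_closed compl_compl join_closed)
qed

text \<open>The relative complement \<open>u \<mapsto> p \<sqinter> u\<^sup>\<perp>\<close> on \<open>\<down>p\<close> is an involution;
  this is where orthomodularity is used.\<close>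

lemma rel_compl_involutive: assumes p: "p \<in> carrier X" and u: "u \<in> carrier X" "le X u p"
  shows "meet X p (compl X (meet X p (compl X u))) = u"
proof -
  have "compl X u = join X (compl X p) (meet X p (compl X u))"
    using orthomodular[of "compl X p" "compl X u"] p u
    by (simp add: compl_anti compl_closed compl_compl)
  also have "\<dots> = compl X (meet X p (compl X (meet X p (compl X u))))"
    using p u by (intro de_morgan_rel[symmetric] meet_closed compl_closed)
  finally have "compl X (compl X u) = compl X (compl X (meet X p (compl X (meet X p (compl X u)))))"
    by simp
  then show ?thesis using p u by (simp add: compl_closed compl_compl meet_closed)
qed

end

context OM
begin

lemma downset_carrier [simp]: "carrier (downset X p) = {u \<in> carrier X. le X u p}"
  and downset_le [simp]: "le (downset X p) = le X"
  and downset_compl [simp]: "compl (downset X p) = (\<lambda>u. meet X p (compl X u))"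
  by (simp_all add: downset_def)

lemma downset_antisym:
  "x \<in> carrier (downset X p) \<Longrightarrow> y \<in> carrier (downset X p) \<Longrightarrow>
    le (downset X p) x y \<Longrightarrow> le (downset X p) y x \<Longrightarrow> x = y"
  using antisym by simp

lemma rel_compl_closed: "p \<in> carrier X \<Longrightarrow> x \<in> carrier X \<Longrightarrow> meet X p (compl X x) \<in> carrier X"
  and rel_compl_le: "p \<in> carrier X \<Longrightarrow> x \<in> carrier X \<Longrightarrow> le X (meet X p (compl X x)) p"
  by (simp_all add: compl_closed meet_closed meet_le1)

context
  fixes p assumes p: "p \<in> carrier X"
begin

lemma downset_glb: "x \<in> carrier X \<Longrightarrow> y \<in> carrier X \<Longrightarrow> le X x p \<Longrightarrow> le X y p \<Longrightarrow>
    is_glb (downset X p) x y (meet X x y)"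
  unfolding is_glb_def
  by (auto intro: meet_closed meet_le1 meet_le2 meet_greatest trans[of _ x p] p)

lemma downset_lub: "x \<in> carrier X \<Longrightarrow> y \<in> carrier X \<Longrightarrow> le X x p \<Longrightarrow> le X y p \<Longrightarrow>
    is_lub (downset X p) x y (join X x y)"
  unfolding is_lub_def
  by (auto intro: join_closed join_ge1 join_ge2 join_least p)

lemma downset_meet: "x \<in> carrier X \<Longrightarrow> y \<in> carrier X \<Longrightarrow> le X x p \<Longrightarrow> le X y p \<Longrightarrow>
    meet (downset X p) x y = meet X x y"
  by (rule meet_unique[OF downset_antisym downset_glb])

lemma downset_join: "x \<in> carrier X \<Longrightarrow> y \<in> carrier X \<Longrightarrow> le X x p \<Longrightarrow> le X y p \<Longrightarrow>
    join (downset X p) x y = join X x y"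
  by (rule join_unique[OF downset_antisym downset_lub])

lemma downset_top_is: "is_top (downset X p) p"
  using p by (auto simp: is_top_def refl)

lemma downset_top: "top (downset X p) = p"
  by (rule top_unique[OF downset_antisym downset_top_is])

lemma downset_bot_is: "is_bot (downset X p) (bot X)"
  using p by (auto simp: is_bot_def bot_le bot_closed)

lemma downset_bot: "bot (downset X p) = bot X"
  by (rule bot_unique[OF downset_antisym downset_bot_is])

lemma rel_compl_meet: assumes u: "u \<in> carrier X" "le X u p"
  shows "meet X u (meet X p (compl X u)) = bot X"
proof -
  have m: "meet X u (meet X p (compl X u)) \<in> carrier X"
    using u p by (simp add: rel_compl_closed meet_closed)
  have "le X (meet X u (meet X p (compl X u))) (meet X u (compl X u))"
    using u p m by (meson compl_closed meet_greatest meet_le1 meet_le2 trans rel_compl_closed)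
  then show ?thesis using u m by (simp add: meet_compl bot_closed bot_le antisym)
qed

lemma rel_compl_join: "u \<in> carrier X \<Longrightarrow> le X u p \<Longrightarrow> join X u (meet X p (compl X u)) = p"
  using orthomodular[of u p] p by (simp add: meet_comm compl_closed)

lemma rel_orthomodular:
  assumes u: "u \<in> carrier X" and v: "v \<in> carrier X" "le X v p" and uv: "le X u v"
  shows "v = join X u (meet X (meet X p (compl X u)) v)"
proof -
  have "is_glb X (meet X p (compl X u)) v (meet X (compl X u) v)"
    unfolding is_glb_def using u v p
    by (auto intro!: meet_closed compl_closed meet_greatest meet_le2 meet_le1
        intro: trans[of _ v p] trans[of _ "meet X p (compl X u)" "compl X u"] rel_compl_closed)
  then show ?thesis using orthomodular[OF u v(1) uv] by (simp add: meet_eqI)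
qed

lemma downset_oml: "is_oml (downset X p)"
proof -
  let ?D = "downset X p"
  have glb: "\<exists>m. is_glb ?D x y m" and lub: "\<exists>m. is_lub ?D x y m"
    if "x \<in> carrier ?D" "y \<in> carrier ?D" for x y
    using that downset_glb downset_lub by fastforce+
  have anti: "le ?D (compl ?D y) (compl ?D x)"
    if "x \<in> carrier ?D" "y \<in> carrier ?D" "le ?D x y" for x y
    using that p by (simp add: meet_mono2 compl_anti compl_closed)
  have om: "y = join ?D x (meet ?D (compl ?D x) y)"
    if x: "x \<in> carrier ?D" and y: "y \<in> carrier ?D" and xy: "le ?D x y" for x y
  proof -
    have w: "meet X p (compl X x) \<in> carrier X" "le X (meet X p (compl X x)) p"
      using p x by (simp_all add: rel_compl_closed rel_compl_le)
    have m: "meet X (meet X p (compl X x)) y \<in> carrier X" "le X (meet X (meet X p (compl X x)) y) p"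
      using w y by (auto intro: meet_closed trans[OF meet_closed[OF w(1)] w(1) p] meet_le1)
    show ?thesis
      using rel_orthomodular[of x y] x y xy w m by (simp add: downset_meet downset_join)
  qed
  show ?thesis
    unfolding is_oml_def
    apply (intro conjI)
    subgoal by (simp add: refl)
    subgoal by (simp add: antisym)
    subgoal using trans by auto
    subgoal using glb by blast
    subgoal using lub by blast
    subgoal using downset_bot_is by blast
    subgoal using downset_top_is by blast
    subgoal using p by (simp add: rel_compl_closed rel_compl_le)
    subgoal using p by (simp add: rel_compl_involutive)
    subgoal using anti by blast
    subgoal using p by (simp add: downset_meet rel_compl_closed rel_compl_le rel_compl_meet downset_bot)
    subgoal using p by (simp add: downset_join rel_compl_closed rel_compl_le rel_compl_join downset_top)
    subgoal using om by blast
    done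
qed

end

end

lemma mor_fst_closed: "is_mor X Y f \<Longrightarrow> x \<in> carrier X \<Longrightarrow> fst f x \<in> carrier Y"
  and mor_snd_closed: "is_mor X Y f \<Longrightarrow> y \<in> carrier Y \<Longrightarrow> snd f y \<in> carrier X"
  and mor_fst_anti: "is_mor X Y f \<Longrightarrow> x \<in> carrier X \<Longrightarrow> x' \<in> carrier X \<Longrightarrow> le X x x' \<Longrightarrow>
      le Y (fst f x') (fst f x)"
  and mor_snd_anti: "is_mor X Y f \<Longrightarrow> y \<in> carrier Y \<Longrightarrow> y' \<in> carrier Y \<Longrightarrow> le Y y y' \<Longrightarrow>
      le X (snd f y') (snd f y)"
  and mor_galois: "is_mor X Y f \<Longrightarrow> x \<in> carrier X \<Longrightarrow> y \<in> carrier Y \<Longrightarrow>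
      le Y y (fst f x) \<longleftrightarrow> le X x (snd f y)"
  unfolding is_mor_def by blast+

lemma dagger_mor: "is_mor X Y f \<Longrightarrow> is_mor Y X (dagger f)"
  unfolding is_mor_def dagger_def by auto

lemma comp_mor:
  assumes Y: "is_oml Y" and f: "is_mor X Y f" and g: "is_mor Y Z g"
  shows "is_mor X Z (comp Y g f)"
proof -
  interpret Y: OM Y by (rule OM.intro[OF Y])
  have galois: "le Z z (fst g (compl Y (fst f x))) \<longleftrightarrow> le X x (snd f (compl Y (snd g z)))"
    if x: "x \<in> carrier X" and z: "z \<in> carrier Z" for x z
  proof -
    have fx: "fst f x \<in> carrier Y" and gz: "snd g z \<in> carrier Y"
      using mor_fst_closed[OF f x] mor_snd_closed[OF g z] .
    have "le Z z (fst g (compl Y (fst f x))) \<longleftrightarrow> le Y (compl Y (fst f x)) (snd g z)"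
      using mor_galois[OF g Y.compl_closed[OF fx] z] .
    also have "\<dots> \<longleftrightarrow> le Y (compl Y (snd g z)) (fst f x)"
      using Y.compl_le_swap2[OF fx gz] .
    also have "\<dots> \<longleftrightarrow> le X x (snd f (compl Y (snd g z)))"
      using mor_galois[OF f x Y.compl_closed[OF gz]] .
    finally show ?thesis .
  qed
  have fst_anti: "le Z (fst g (compl Y (fst f x'))) (fst g (compl Y (fst f x)))"
    if "x \<in> carrier X" "x' \<in> carrier X" "le X x x'" for x x'
    using that f g by (meson mor_fst_anti mor_fst_closed Y.compl_anti Y.compl_closed)
  have snd_anti: "le X (snd f (compl Y (snd g z'))) (snd f (compl Y (snd g z)))"
    if "z \<in> carrier Z" "z' \<in> carrier Z" "le Z z z'" for z z'
    using that f g by (meson mor_snd_anti mor_snd_closed Y.compl_anti Y.compl_closed)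
  show ?thesis
    unfolding is_mor_def comp_def o_def prod.sel
    using f g galois fst_anti snd_anti by (simp add: mor_fst_closed mor_snd_closed Y.compl_closed)
qed

lemma zero_mor_fst [simp]: "fst (zero_mor Z Y) = (\<lambda>_. top Y)"
  and zero_mor_snd [simp]: "snd (zero_mor Z Y) = (\<lambda>_. top Z)"
  by (simp_all add: zero_mor_def comp_def from_zero_def to_zero_def o_def)

text \<open>A composite \<open>e \<circ> h\<close> is zero iff its first component is constantly \<open>1\<close>;
  the second component then is constantly \<open>1\<close> by the Galois connection.\<close>

lemma comp_zero_iff:
  assumes Z: "is_oml Z" and Y: "is_oml Y" and W: "is_oml W"
    and h: "is_mor Z Y h" and e: "is_mor Y W e"
  shows "mor_eq Z W (comp Y e h) (zero_mor Z W) \<longleftrightarrow>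
    (\<forall>z\<in>carrier Z. fst e (compl Y (fst h z)) = top W)"
proof -
  interpret Z: OM Z by (rule OM.intro[OF Z])
  interpret Y: OM Y by (rule OM.intro[OF Y])
  interpret W: OM W by (rule OM.intro[OF W])
  have "snd h (compl Y (snd e w)) = top Z"
    if vanish: "\<forall>z\<in>carrier Z. fst e (compl Y (fst h z)) = top W" and w: "w \<in> carrier W" for w
  proof (rule Z.top_eqI[symmetric])
    have ew: "snd e w \<in> carrier Y" using mor_snd_closed[OF e w] .
    show "snd h (compl Y (snd e w)) \<in> carrier Z"
      using mor_snd_closed[OF h Y.compl_closed[OF ew]] .
    fix z assume z: "z \<in> carrier Z"
    have hz: "fst h z \<in> carrier Y" using mor_fst_closed[OF h z] .
    have "le W w (fst e (compl Y (fst h z)))" using vanish z w W.le_top by simp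
    then have "le Y (compl Y (fst h z)) (snd e w)"
      using mor_galois[OF e Y.compl_closed[OF hz] w] by simp
    then have "le Y (compl Y (snd e w)) (fst h z)" using Y.compl_le_swap2[OF hz ew] by simp
    then show "le Z z (snd h (compl Y (snd e w)))"
      using mor_galois[OF h z Y.compl_closed[OF ew]] by simp
  qed
  then show ?thesis unfolding mor_eq_def comp_def by auto
qed

lemma downmor_mor:
  assumes X: "is_oml X" and p: "p \<in> carrier X"
  shows "is_mor (downset X p) X (downmor X p)"
proof -
  interpret X: OM X by (rule OM.intro[OF X])
  have galois: "le X x (compl X u) \<longleftrightarrow> le X u (meet X p (compl X x))"
    if u: "u \<in> carrier X" "le X u p" and x: "x \<in> carrier X" for u x
    using X.compl_le_swap[OF x u(1)] X.meet_greatest[OF p X.compl_closed[OF x] u]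
      X.meet_le2[OF p X.compl_closed[OF x]]
      X.trans[OF u(1) X.meet_closed[OF p X.compl_closed[OF x]] X.compl_closed[OF x]]
    by blast
  have snd_anti: "le X (meet X p (compl X x')) (meet X p (compl X x))"
    if "x \<in> carrier X" "x' \<in> carrier X" "le X x x'" for x x'
    using that p by (simp add: X.compl_anti X.compl_closed X.meet_mono2)
  show ?thesis
    unfolding is_mor_def downmor_def prod.sel
    apply (intro conjI)
    subgoal by (simp add: X.compl_closed)
    subgoal using p by (simp add: X.rel_compl_closed X.rel_compl_le)
    subgoal by (simp add: X.compl_anti)
    subgoal using snd_anti by simp
    subgoal using galois by simp
    done
qed

text \<open>A morphism \<open>h : Z \<rightarrow> X\<close> with
  \<open>h\<^sub>*(z)\<^sup>\<perp> \<le> p\<close> for all \<open>z\<close> factors uniquely through \<open>\<down>p \<rightarrow> X\<close>, via the lift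
  \<open>(z \<mapsto> p \<sqinter> h\<^sub>*(z), h\<^sup>*)\<close>.\<close>

definition downmor_lift :: "'a oml \<Rightarrow> 'a \<Rightarrow> ('z, 'a) mor \<Rightarrow> ('z, 'a) mor" where
  "downmor_lift X p h = ((\<lambda>z. meet X p (fst h z)), snd h)"

lemma (in OM) eq_by_lower_bounds:
  "a \<in> carrier X \<Longrightarrow> b \<in> carrier X \<Longrightarrow> (\<And>z. z \<in> carrier X \<Longrightarrow> le X z a \<longleftrightarrow> le X z b) \<Longrightarrow> a = b"
  by (meson antisym refl)

locale downmor_factor =
  X: OM X + Z: OM Z
  for X :: "'a oml" and Z :: "'z oml" and p :: 'a and h :: "('z, 'a) mor" +
  assumes p: "p \<in> carrier X"
    and h: "is_mor Z X h"
    and below: "\<And>z. z \<in> carrier Z \<Longrightarrow> le X (compl X (fst h z)) p"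
begin

lemma h_fst_closed: "z \<in> carrier Z \<Longrightarrow> fst h z \<in> carrier X"
  and h_snd_closed: "x \<in> carrier X \<Longrightarrow> snd h x \<in> carrier Z"
  using h by (simp_all add: mor_fst_closed mor_snd_closed)

text \<open>Since the whole image of \<open>h\<^sub>*\<close> lies above \<open>p\<^sup>\<perp>\<close>, \<open>h\<^sup>*\<close> does not see \<open>p\<^sup>\<perp>\<close>.\<close>

lemma snd_join_compl: assumes w: "w \<in> carrier X"
  shows "snd h (join X (compl X p) w) = snd h w"
proof (rule Z.eq_by_lower_bounds)
  have cp: "compl X p \<in> carrier X" using p by (rule X.compl_closed)
  show "snd h (join X (compl X p) w) \<in> carrier Z" "snd h w \<in> carrier Z"
    using w cp by (simp_all add: h_snd_closed X.join_closed)
  fix z assume z: "z \<in> carrier Z"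
  have above: "le X (compl X p) (fst h z)"
    using below[OF z] X.compl_le_swap2[OF h_fst_closed[OF z] p] by simp
  have "le Z z (snd h (join X (compl X p) w)) \<longleftrightarrow> le X (join X (compl X p) w) (fst h z)"
    using mor_galois[OF h z X.join_closed[OF cp w]] by simp
  also have "\<dots> \<longleftrightarrow> le X w (fst h z)"
    using above cp w h_fst_closed[OF z]
    by (meson X.join_closed X.join_ge2 X.join_least X.trans)
  also have "\<dots> \<longleftrightarrow> le Z z (snd h w)" using mor_galois[OF h z w] .
  finally show "le Z z (snd h (join X (compl X p) w)) \<longleftrightarrow> le Z z (snd h w)" .
qed

lemma lift_mor: "is_mor Z (downset X p) (downmor_lift X p h)"
proof -
  have galois: "le X x (meet X p (fst h z)) \<longleftrightarrow> le Z z (snd h x)"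
    if z: "z \<in> carrier Z" and x: "x \<in> carrier X" "le X x p" for z x
    using mor_galois[OF h z x(1)] x p h_fst_closed[OF z]
    by (meson X.meet_greatest X.meet_le2 X.meet_closed X.trans)
  show ?thesis
    unfolding is_mor_def downmor_lift_def prod.sel
    apply (intro conjI)
    subgoal using p by (simp add: X.meet_closed X.meet_le1 h_fst_closed)
    subgoal by (simp add: h_snd_closed)
    subgoal using p by (simp add: X.meet_mono2 h_fst_closed mor_fst_anti[OF h])
    subgoal by (simp add: mor_snd_anti[OF h])
    subgoal using galois by simp
    done
qed

lemma lift_comp: "mor_eq Z X (comp (downset X p) (downmor X p) (downmor_lift X p h)) h"
proof -
  have fst_eq: "compl X (meet X p (compl X (meet X p (fst h z)))) = fst h z"
    if z: "z \<in> carrier Z" for z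
  proof -
    have hz: "fst h z \<in> carrier X" using h_fst_closed[OF z] .
    have "meet X p (compl X (meet X p (compl X (compl X (fst h z))))) = compl X (fst h z)"
      using X.rel_compl_involutive[OF p X.compl_closed[OF hz] below[OF z]] .
    then show ?thesis using hz by (simp add: X.compl_compl)
  qed
  have snd_eq: "snd h (meet X p (compl X (meet X p (compl X x)))) = snd h x"
    if x: "x \<in> carrier X" for x
  proof -
    let ?x' = "meet X p (compl X (meet X p (compl X x)))"
    have cp: "compl X p \<in> carrier X" using p by (rule X.compl_closed)
    have jx: "join X (compl X p) x \<in> carrier X" using cp x by (rule X.join_closed)
    have x': "?x' = meet X p (join X (compl X p) x)" using x p by (simp add: X.de_morgan_rel)
    have "join X (compl X p) ?x' = join X (compl X p) x"
      using X.orthomodular[OF cp jx X.join_ge1[OF cp x]] x' p by (simp add: X.compl_compl)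
    then have "snd h (join X (compl X p) ?x') = snd h (join X (compl X p) x)" by simp
    then show ?thesis
      using x p by (simp add: snd_join_compl X.rel_compl_closed X.compl_closed)
  qed
  show ?thesis
    unfolding mor_eq_def comp_def downmor_def downmor_lift_def using fst_eq snd_eq by simp
qed

lemma lift_unique:
  assumes u: "is_mor Z (downset X p) u"
    and eq: "mor_eq Z X (comp (downset X p) (downmor X p) u) h"
  shows "mor_eq Z (downset X p) u (downmor_lift X p h)"
proof -
  have "fst u z = meet X p (fst h z)" if z: "z \<in> carrier Z" for z
  proof -
    have uz: "fst u z \<in> carrier X" "le X (fst u z) p" using mor_fst_closed[OF u z] by auto
    have "compl X (meet X p (compl X (fst u z))) = fst h z"
      using eq z unfolding mor_eq_def comp_def downmor_def by simp
    then have "meet X p (compl X (fst u z)) = compl X (fst h z)"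
      using uz p by (metis X.compl_compl X.rel_compl_closed)
    then show ?thesis
      using X.rel_compl_involutive[OF p uz] X.compl_compl[OF h_fst_closed[OF z]] by simp
  qed
  moreover have "snd u y = snd h y" if y: "y \<in> carrier X" "le X y p" for y
  proof -
    have "snd u (meet X p (compl X (meet X p (compl X y)))) = snd h y"
      using eq y(1) unfolding mor_eq_def comp_def downmor_def by simp
    then show ?thesis using X.rel_compl_involutive[OF p y] by simp
  qed
  ultimately show ?thesis unfolding mor_eq_def downmor_lift_def by simp
qed

end

lemma kernel_downmor:
  assumes X: "is_oml X" and K: "is_oml K" and G: "is_mor X K G" and p: "p \<in> carrier X"
    and vanish: "\<And>x. x \<in> carrier X \<Longrightarrow> fst G x = top K \<longleftrightarrow> le X x p"
  shows "is_kernel T (downset X p) X K (downmor X p) G"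
proof -
  interpret X: OM X by (rule OM.intro[OF X])
  have D: "is_oml (downset X p)" and d: "is_mor (downset X p) X (downmor X p)"
    using X.downset_oml[OF p] downmor_mor[OF X p] .
  have "mor_eq (downset X p) K (comp X G (downmor X p)) (zero_mor (downset X p) K)"
    using comp_zero_iff[OF D X K d G] vanish by (simp add: downmor_def X.compl_compl)
  moreover have "\<exists>u. is_mor Z (downset X p) u \<and> mor_eq Z X (comp (downset X p) (downmor X p) u) h \<and>
      (\<forall>u'. is_mor Z (downset X p) u' \<and> mor_eq Z X (comp (downset X p) (downmor X p) u') h \<longrightarrow>
        mor_eq Z (downset X p) u' u)"
    if Z: "is_oml Z" and h: "is_mor Z X h" and hG: "mor_eq Z K (comp X G h) (zero_mor Z K)"
    for Z :: "'z oml" and h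
  proof -
    have "le X (compl X (fst h z)) p" if "z \<in> carrier Z" for z
      using hG comp_zero_iff[OF Z X K h G] vanish that mor_fst_closed[OF h] X.compl_closed by blast
    then interpret downmor_factor X Z p h
      using X Z p h by (simp add: downmor_factor_def downmor_factor_axioms_def OM_def)
    show ?thesis using lift_mor lift_comp lift_unique by blast
  qed
  ultimately show ?thesis unfolding is_kernel_def using D d by blast
qed

text \<open>The image of \<open>c\<^sub>*\<close> lies above
  \<open>q\<close>, and \<open>q\<close> itself is attained because \<open>\<down>q\<^sup>\<perp> \<rightarrow> Y\<close> factors through \<open>c\<close>.\<close>

lemma kernel_dagger_vanishing:
  fixes Y :: "'b oml"
  assumes ker: "is_kernel TYPE('b) K Y W c e" and Y: "is_oml Y" and W: "is_oml W"
    and e: "is_mor Y W e" and q: "q \<in> carrier Y"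
    and vanish: "\<And>u. u \<in> carrier Y \<Longrightarrow> fst e u = top W \<longleftrightarrow> le Y u (compl Y q)"
    and y: "y \<in> carrier Y"
  shows "snd c y = top K \<longleftrightarrow> le Y y q"
proof -
  interpret Y: OM Y by (rule OM.intro[OF Y])
  have K: "is_oml K" and c: "is_mor K Y c"
    and ce: "mor_eq K W (comp Y e c) (zero_mor K W)"
    using ker unfolding is_kernel_def by blast+
  interpret K: OM K by (rule OM.intro[OF K])
  have cq: "compl Y q \<in> carrier Y" using q by (rule Y.compl_closed)
  have above: "le Y q (fst c k)" if k: "k \<in> carrier K" for k
  proof -
    have ck: "fst c k \<in> carrier Y" using mor_fst_closed[OF c k] .
    have "le Y (compl Y (fst c k)) (compl Y q)"
      using ce comp_zero_iff[OF K Y W c e] vanish k ck Y.compl_closed by blast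
    then show ?thesis using Y.compl_le_swap2[OF ck cq] q by (simp add: Y.compl_compl)
  qed
  obtain k0 where k0: "k0 \<in> carrier K" "fst c k0 = q"
  proof -
    let ?D = "downset Y (compl Y q)"
    have D: "is_oml ?D" and d: "is_mor ?D Y (downmor Y (compl Y q))"
      using Y.downset_oml[OF cq] downmor_mor[OF Y cq] .
    have "mor_eq ?D W (comp Y e (downmor Y (compl Y q))) (zero_mor ?D W)"
      using comp_zero_iff[OF D Y W d e] vanish by (simp add: downmor_def Y.compl_compl)
    then obtain u where u: "is_mor ?D K u" "mor_eq ?D Y (comp K c u) (downmor Y (compl Y q))"
      using ker D d unfolding is_kernel_def by blast
    have top_D: "compl Y q \<in> carrier ?D" using cq by (simp add: Y.refl)
    have "fst c (compl K (fst u (compl Y q))) = q"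
      using u(2) top_D q unfolding mor_eq_def comp_def downmor_def by (simp add: Y.compl_compl)
    moreover have "compl K (fst u (compl Y q)) \<in> carrier K"
      using mor_fst_closed[OF u(1) top_D] by (rule K.compl_closed)
    ultimately show ?thesis using that by blast
  qed
  have "snd c y = top K \<longleftrightarrow> (\<forall>k\<in>carrier K. le K k (snd c y))"
    using K.top_eqI K.le_top mor_snd_closed[OF c y] by metis
  also have "\<dots> \<longleftrightarrow> (\<forall>k\<in>carrier K. le Y y (fst c k))"
    using mor_galois[OF c _ y] by simp
  also have "\<dots> \<longleftrightarrow> le Y y q"
    using above k0 y q mor_fst_closed[OF c] Y.trans by metis
  finally show ?thesis .
qed

text \<open>Inverse image: the pullback of \<open>\<down>b \<rightarrow> Y\<close> along \<open>f\<close> is the kernel of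
  \<open>coker(b) \<circ> f\<close>, and this kernel is \<open>\<down>f\<^sup>*(b\<^sup>\<perp>) \<rightarrow> X\<close>.\<close>

lemma inverse_image_kernel:
  fixes X :: "'a oml" and Y :: "'b oml" and K :: "'k oml"
  assumes X: "is_oml X" and Y: "is_oml Y" and f: "is_mor X Y f" and b: "b \<in> carrier Y"
    and ker: "is_kernel TYPE('b) K Y (downset Y b) c (dagger (downmor Y b))"
  shows "is_kernel TYPE('z) (downset X (snd f (compl Y b))) X K
    (downmor X (snd f (compl Y b))) (comp Y (dagger c) f)"
proof -
  interpret Y: OM Y by (rule OM.intro[OF Y])
  have K: "is_oml K" and c: "is_mor K Y c" using ker unfolding is_kernel_def by blast+
  have cb: "compl Y b \<in> carrier Y" using b by (rule Y.compl_closed)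
  have coker_vanish: "snd c y = top K \<longleftrightarrow> le Y y b" if y: "y \<in> carrier Y" for y
  proof (rule kernel_dagger_vanishing[OF ker Y Y.downset_oml[OF b]
        dagger_mor[OF downmor_mor[OF Y b]] b _ y])
    fix u assume u: "u \<in> carrier Y"
    have "fst (dagger (downmor Y b)) u = top (downset Y b) \<longleftrightarrow> meet Y b (compl Y u) = b"
      by (simp add: dagger_def downmor_def Y.downset_top[OF b])
    also have "\<dots> \<longleftrightarrow> le Y u (compl Y b)"
      using b u by (simp add: Y.meet_eq_left_iff Y.compl_closed Y.compl_le_swap)
    finally show "fst (dagger (downmor Y b)) u = top (downset Y b) \<longleftrightarrow> le Y u (compl Y b)" .
  qed
  show ?thesis
  proof (rule kernel_downmor[OF X K comp_mor[OF Y f dagger_mor[OF c]] mor_snd_closed[OF f cb]])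
    fix x assume x: "x \<in> carrier X"
    have fx: "fst f x \<in> carrier Y" using mor_fst_closed[OF f x] .
    have "fst (comp Y (dagger c) f) x = top K \<longleftrightarrow> le Y (compl Y (fst f x)) b"
      using coker_vanish[OF Y.compl_closed[OF fx]] by (simp add: comp_def dagger_def)
    also have "\<dots> \<longleftrightarrow> le Y (compl Y b) (fst f x)" using Y.compl_le_swap2[OF fx b] .
    also have "\<dots> \<longleftrightarrow> le X x (snd f (compl Y b))" using mor_galois[OF f x cb] .
    finally show "fst (comp Y (dagger c) f) x = top K \<longleftrightarrow> le X x (snd f (compl Y b))" .
  qed
qed

text \<open>Direct image: the image of \<open>f \<circ> a\<close>, i.e. the kernel of \<open>coker(f \<circ> a)\<close>
  (the dagger of a kernel of \<open>(f \<circ> a)\<^sup>\<dagger>\<close>), is \<open>\<down>f\<^sub>*(a)\<^sup>\<perp> \<rightarrow> Y\<close>.\<close>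

lemma direct_image_kernel:
  fixes X :: "'a oml" and Y :: "'b oml" and L :: "'l oml"
  assumes X: "is_oml X" and Y: "is_oml Y" and f: "is_mor X Y f" and a: "a \<in> carrier X"
    and ker: "is_kernel TYPE('b) L Y (downset X a) c (dagger (comp X f (downmor X a)))"
  shows "is_kernel TYPE('z) (downset Y (compl Y (fst f a))) Y L
    (downmor Y (compl Y (fst f a))) (dagger c)"
proof -
  interpret X: OM X by (rule OM.intro[OF X])
  interpret Y: OM Y by (rule OM.intro[OF Y])
  have L: "is_oml L" and c: "is_mor L Y c" using ker unfolding is_kernel_def by blast+
  have fa: "fst f a \<in> carrier Y" using mor_fst_closed[OF f a] .
  let ?q = "compl Y (fst f a)"
  show ?thesis
  proof (rule kernel_downmor[OF Y L dagger_mor[OF c] Y.compl_closed[OF fa]])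
    fix y assume y: "y \<in> carrier Y"
    have "snd c y = top L \<longleftrightarrow> le Y y ?q"
    proof (rule kernel_dagger_vanishing[OF ker Y X.downset_oml[OF a]
          dagger_mor[OF comp_mor[OF X downmor_mor[OF X a] f]] Y.compl_closed[OF fa] _ y])
      fix u assume u: "u \<in> carrier Y"
      have fu: "snd f u \<in> carrier X" using mor_snd_closed[OF f u] .
      have "fst (dagger (comp X f (downmor X a))) u = top (downset X a) \<longleftrightarrow> meet X a (snd f u) = a"
        using fu by (simp add: dagger_def comp_def downmor_def X.compl_compl X.downset_top[OF a])
      also have "\<dots> \<longleftrightarrow> le Y u (compl Y ?q)"
        using a fu fa by (simp add: X.meet_eq_left_iff Y.compl_compl mor_galois[OF f a u])
      finally show "fst (dagger (comp X f (downmor X a))) u = top (downset X a) \<longleftrightarrow>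
          le Y u (compl Y ?q)" .
    qed
    then show "fst (dagger c) y = top L \<longleftrightarrow> le Y y ?q" by (simp add: dagger_def)
  qed
qed

theorem mainTheorem6:
  fixes X :: "'a oml" and Y :: "'b oml" and f :: "('a, 'b) mor" and a :: 'a and b :: 'b
  assumes "is_oml X" and "is_oml Y" and "is_mor X Y f"
    and "a \<in> carrier X" and "b \<in> carrier Y"
  shows "(\<forall>(K :: 'k oml) c.
            is_kernel TYPE('b) K Y (downset Y b) c (dagger (downmor Y b)) \<longrightarrow>
            is_kernel TYPE('z) (downset X (snd f (compl Y b))) X K
              (downmor X (snd f (compl Y b))) (comp Y (dagger c) f))
       \<and> (\<forall>(L :: 'l oml) c.
            is_kernel TYPE('b) L Y (downset X a) c (dagger (comp X f (downmor X a))) \<longrightarrow>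
            is_kernel TYPE('z) (downset Y (compl Y (fst f a))) Y L
              (downmor Y (compl Y (fst f a))) (dagger c))"
  using inverse_image_kernel[OF assms(1-3,5)] direct_image_kernel[OF assms(1-4)] by blast
end
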